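(* Set $\mathrm{Single}(0,A)=\mathrm{Total}(0,A)=0$. Then for every $n\ge 1$: $\mathrm{Single}(n,A)$ equals the smallest $x\in A$ with $\mathrm{gap}(x)>\mathrm{Total}(n-1,A)$, or $\infty$ if there is no such $x$ (in which case also $\mathrm{Total}(n,A)=\infty$); and $\mathrm{Total}(n,A)=\mathrm{Single}(n,A)+\mathrm{Total}(n-1,A)=\sum_{i=1}^{n}\mathrm{Single}(i,A)$.
   Context: Let $A$ be a set of positive integers with $1\in A$ (the allowed tile values). For $x\in A$, let $\mathrm{gap}(x)=x'-x$ where $x'$ is the smallest element of $A$ greater than $x$, with $\mathrm{gap}(x)=\infty$ if $x=\max A$. For an integer $n\ge 0$, the abstract generalized 2048 game $\mathrm{AGG}(n,A)$ is played on $n$ indistinguishable cells. A position assigns to each cell either nothing (the cell is empty) or a tile carrying a value in $A$. The initial position has all cells empty. A step, which can be performed from any position having at least one empty cell, consists of: (i) placing a new tile of value $1$ into a chosen empty cell; then (ii) optionally choosing any collection of pairwise disjoint sets of nonempty cells such that the sum of the tile values in each chosen set belongs to $A$, and merging each chosen set into a single tile, whose value is that sum, placed in one cell of the set, the other cells of the set becoming empty. The game ends when, after a step, all cells are nonempty (no further step is then possible). A position is reachable if it can be obtained from the initial position by a finite sequence of steps; its total value is the sum of its tile values. For $n\ge1$, $\mathrm{Single}(n,A)$ is the supremum (possibly $\infty$) of the values $x\in A$ such that the position of $\mathrm{AGG}(n,A)$ with one tile of value $x$ and $n-1$ empty cells is reachable, and $\mathrm{Total}(n,A)$ is the supremum (possibly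 $\infty$) of the total values of reachable positions of $\mathrm{AGG}(n,A)$. *)

theory Defs
  imports Main "HOL-Library.Multiset" "HOL-Library.Extended_Nat"
begin

text \<open>A position of AGG(n,A) is the multiset of the values of the tiles on the
  (indistinguishable) cells; the number of empty cells is n minus its size.\<close>

definition agg_step :: "nat \<Rightarrow> nat set \<Rightarrow> nat multiset \<Rightarrow> nat multiset \<Rightarrow> bool" where
  "agg_step n A M M' \<longleftrightarrow> size M < n \<and>
     (\<exists>R G. M + {#1#} = R + \<Sum>\<^sub># G \<and>
            (\<forall>g \<in># G. g \<noteq> {#} \<and> sum_mset g \<in> A) \<and>
            M' = R + image_mset sum_mset G)"

inductive agg_reachable :: "nat \<Rightarrow> nat set \<Rightarrow> nat multiset \<Rightarrow> bool" for n A where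
  init: "agg_reachable n A {#}"
| step: "agg_reachable n A M \<Longrightarrow> agg_step n A M M' \<Longrightarrow> agg_reachable n A M'"

definition gap :: "nat set \<Rightarrow> nat \<Rightarrow> enat" where
  "gap A x = (if \<exists>y\<in>A. y > x then enat ((LEAST y. y \<in> A \<and> y > x) - x) else \<infinity>)"

text \<open>For n = 0 the set below is empty and the supremum is 0, matching the convention.\<close>
definition Single :: "nat \<Rightarrow> nat set \<Rightarrow> enat" where
  "Single n A = Sup {enat x | x. x \<in> A \<and> agg_reachable n A {#x#}}"

definition Total :: "nat \<Rightarrow> nat set \<Rightarrow> enat" where
  "Total n A = Sup {enat (sum_mset M) | M. agg_reachable n A M}"

end

theory Submission
  imports Defs
begin

text \<open>Let \<open>m\<close> be the least \<open>x \<in> A\<close> with \<open>gap A x > Total k A\<close>. Sitting on one tile of value \<open>x\<close>,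
  the other \<open>k\<close> cells can produce any total \<open>d \<le> Total k A\<close> (totals grow by one per step), so
  whenever \<open>gap A x \<le> Total k A\<close> the tile can be merged with a position of total \<open>gap A x - 1\<close>
  plus the new \<open>1\<close> to reach the next element of \<open>A\<close>; climbing from \<open>1\<close> reaches \<open>m\<close>.
  Conversely, by induction over a play on \<open>k + 1\<close> cells, every position consists of one tile
  \<open>c \<le> m\<close> and a position reachable on \<open>k\<close> cells: a merge involving \<open>c\<close> adds at most
  \<open>Total k A < gap A m\<close>, so it cannot jump past \<open>m\<close>. If no such \<open>m\<close> exists, \<open>A\<close> is infinite (its maximum would
  have infinite gap) and every element is climbed to.\<close>

definition merges_into :: "nat set \<Rightarrow> nat multiset \<Rightarrow> nat multiset \<Rightarrow> bool" where
  "merges_into A X Y \<longleftrightarrow>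
     (\<exists>P. X = \<Sum>\<^sub># P \<and> (\<forall>p\<in>#P. p \<noteq> {#} \<and> sum_mset p \<in> A) \<and> Y = image_mset sum_mset P)"

lemma image_mset_eq_Union_mset_D:
  "image_mset f P = \<Sum>\<^sub># Q \<Longrightarrow> \<exists>W. P = \<Sum>\<^sub># W \<and> Q = image_mset (image_mset f) W"
proof (induction Q arbitrary: P)
  case empty
  then show ?case by (intro exI[of _ "{#}"]) simp
next
  case (add q Q)
  then have "image_mset f P = q + \<Sum>\<^sub># Q" by simp
  from image_mset_eq_plusD[OF this] obtain P1 P2 where
    "P = P1 + P2" "q = image_mset f P1" "\<Sum>\<^sub># Q = image_mset f P2" by blast
  with add.IH[of P2] obtain W where "P2 = \<Sum>\<^sub># W" "Q = image_mset (image_mset f) W" by metis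
  with \<open>P = P1 + P2\<close> \<open>q = _\<close> show ?case
    by (intro exI[of _ "add_mset P1 W"]) simp
qed

lemma sum_mset_image_sum_mset:
  "sum_mset (image_mset sum_mset W) = sum_mset (\<Sum>\<^sub># (W :: 'a::comm_monoid_add multiset multiset))"
  by (induction W) auto

lemma size_le_size_Union_mset: "\<forall>g\<in>#G. g \<noteq> {#} \<Longrightarrow> size G \<le> size (\<Sum>\<^sub># G)"
proof (induction G)
  case (add g G)
  then have "size g \<ge> 1" by (simp add: Suc_le_eq nonempty_has_size)
  with add show ?case by simp
qed simp

lemma merges_into_refl: "set_mset X \<subseteq> A \<Longrightarrow> merges_into A X X"
  unfolding merges_into_def
  by (intro exI[of _ "image_mset (\<lambda>x. {#x#}) X"]) (auto simp: multiset.map_comp comp_def)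

lemma merges_into_trans:
  assumes "merges_into A X Y" "merges_into A Y Z"
  shows "merges_into A X Z"
proof -
  obtain P Q where P: "X = \<Sum>\<^sub># P" "\<forall>p\<in>#P. p \<noteq> {#} \<and> sum_mset p \<in> A" "Y = image_mset sum_mset P"
    and Q: "Y = \<Sum>\<^sub># Q" "\<forall>q\<in>#Q. q \<noteq> {#} \<and> sum_mset q \<in> A" "Z = image_mset sum_mset Q"
    using assms unfolding merges_into_def by blast
  obtain W where W: "P = \<Sum>\<^sub># W" "Q = image_mset (image_mset sum_mset) W"
    using image_mset_eq_Union_mset_D[of sum_mset P Q] P(3) Q(1) by auto
  \<comment> \<open>Merging the blocks of \<open>Q\<close> means merging, in one go, the unions of the \<open>P\<close>-blocks they group.\<close>
  let ?P = "image_mset sum_mset W"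
  have "\<forall>p\<in>#?P. p \<noteq> {#} \<and> sum_mset p \<in> A"
  proof
    fix p assume "p \<in># ?P"
    then obtain w where w: "w \<in># W" "p = \<Sum>\<^sub># w" by auto
    then have "image_mset sum_mset w \<in># Q" using W(2) by auto
    with Q(2) have "image_mset sum_mset w \<noteq> {#}" "sum_mset (image_mset sum_mset w) \<in> A" by auto
    moreover have "\<forall>x\<in>#w. x \<noteq> {#}" using w(1) W(1) P(2) by auto
    ultimately show "p \<noteq> {#} \<and> sum_mset p \<in> A" using w(2) by (auto simp: sum_mset_image_sum_mset)
  qed
  moreover have "X = \<Sum>\<^sub># ?P" using P(1) W(1) by (simp add: sum_mset_image_sum_mset)
  moreover have "Z = image_mset sum_mset ?P" using Q(3) W(2)
    by (simp add: multiset.map_comp comp_def sum_mset_image_sum_mset)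
  ultimately show ?thesis unfolding merges_into_def by blast
qed

lemma merges_into_singleton: "merges_into A {#x#} Y \<Longrightarrow> Y = {#x#}"
proof -
  assume "merges_into A {#x#} Y"
  then obtain P where P: "{#x#} = \<Sum>\<^sub># P" "\<forall>p\<in>#P. p \<noteq> {#}" "Y = image_mset sum_mset P"
    unfolding merges_into_def by blast
  have "size P \<le> 1" using size_le_size_Union_mset[OF P(2)] arg_cong[OF P(1), of size] by simp
  moreover have "P \<noteq> {#}" using P(1) by auto
  ultimately obtain p where "P = {#p#}"
    by (metis One_nat_def le_SucE le_zero_eq size_1_singleton_mset size_eq_0_iff_empty)
  with P have "p = {#x#}" "Y = {#sum_mset p#}" by simp_all
  then show ?thesis by simp
qed

lemma merges_into_add_mset_D:
  assumes "merges_into A (add_mset c X) Y"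
  obtains h Z where "h \<subseteq># X" "c + sum_mset h \<in> A" "Y = add_mset (c + sum_mset h) Z"
    "merges_into A (X - h) Z"
proof -
  obtain P where P: "add_mset c X = \<Sum>\<^sub># P" "\<forall>p\<in>#P. p \<noteq> {#} \<and> sum_mset p \<in> A"
    "Y = image_mset sum_mset P"
    using assms unfolding merges_into_def by blast
  have "c \<in># \<Sum>\<^sub># P" using P(1)[symmetric] by simp
  then obtain g where g: "g \<in># P" "c \<in># g" by auto
  then obtain P' h where P': "P = add_mset g P'" and h: "g = add_mset c h"
    by (metis insert_DiffM)
  have X: "X = h + \<Sum>\<^sub># P'" using P(1) P' h by simp
  show thesis
  proof
    show "h \<subseteq># X" using X by simp
    show "c + sum_mset h \<in> A" using P(2) g(1) h by auto
    show "Y = add_mset (c + sum_mset h) (image_mset sum_mset P')" using P(3) P' h by simp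
    show "merges_into A (X - h) (image_mset sum_mset P')"
      unfolding merges_into_def using X P(2) P' by auto
  qed
qed

lemma agg_step_iff_merges_into:
  assumes "set_mset M \<subseteq> A" "1 \<in> A"
  shows "agg_step n A M M' \<longleftrightarrow> size M < n \<and> merges_into A (M + {#1#}) M'"
proof
  assume "agg_step n A M M'"
  then obtain R G where RG: "size M < n" "M + {#1#} = R + \<Sum>\<^sub># G"
    "\<forall>g \<in># G. g \<noteq> {#} \<and> sum_mset g \<in> A" "M' = R + image_mset sum_mset G"
    unfolding agg_step_def by blast
  have "set_mset R \<subseteq> set_mset (M + {#1#})" using RG(2) by (metis set_mset_union sup_ge1)
  with assms have "set_mset R \<subseteq> A" by auto
  \<comment> \<open>The untouched tiles \<open>R\<close> become singleton blocks.\<close>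
  let ?P = "G + image_mset (\<lambda>x. {#x#}) R"
  have "M + {#1#} = \<Sum>\<^sub># ?P" using RG(2) by (simp add: add.commute)
  moreover have "M' = image_mset sum_mset ?P" using RG(4)
    by (simp add: multiset.map_comp comp_def add.commute)
  moreover have "\<forall>p\<in>#?P. p \<noteq> {#} \<and> sum_mset p \<in> A" using RG(3) \<open>set_mset R \<subseteq> A\<close> by auto
  ultimately show "size M < n \<and> merges_into A (M + {#1#}) M'"
    using RG(1) unfolding merges_into_def by blast
next
  assume "size M < n \<and> merges_into A (M + {#1#}) M'"
  then show "agg_step n A M M'" unfolding agg_step_def merges_into_def by (metis add_0)
qed

lemma agg_step_sum_mset: "agg_step n A M M' \<Longrightarrow> sum_mset M' = sum_mset M + 1"
proof -
  assume "agg_step n A M M'"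
  then obtain R G where RG: "M + {#1#} = R + \<Sum>\<^sub># G" "M' = R + image_mset sum_mset G"
    unfolding agg_step_def by blast
  have "sum_mset (M + {#1#}) = sum_mset R + sum_mset (\<Sum>\<^sub># G)" using RG(1) by simp
  with RG(2) show ?thesis by (simp add: sum_mset_image_sum_mset)
qed

lemma agg_reachable_tiles:
  assumes "agg_reachable n A M" "1 \<in> A"
  shows "set_mset M \<subseteq> A" "size M \<le> n"
proof -
  have "set_mset M \<subseteq> A \<and> size M \<le> n"
    using assms(1)
  proof induction
    case (step M M')
    then have "size M < n" "merges_into A (M + {#1#}) M'"
      using agg_step_iff_merges_into assms(2) by blast+
    then obtain P where "M + {#1#} = \<Sum>\<^sub># P" "\<forall>p\<in>#P. p \<noteq> {#} \<and> sum_mset p \<in> A"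
      "M' = image_mset sum_mset P"
      unfolding merges_into_def by blast
    then have "size M' \<le> size (M + {#1#})" using size_le_size_Union_mset[of P] by simp
    with \<open>size M < n\<close> \<open>M' = _\<close> \<open>\<forall>p\<in>#P. _\<close> show ?case by auto
  qed simp
  then show "set_mset M \<subseteq> A" "size M \<le> n" by auto
qed

lemma agg_reachable_add_one:
  assumes "agg_reachable n A M" "size M < n" "1 \<in> A"
  shows "agg_reachable n A (M + {#1#})"
proof -
  have "set_mset M \<subseteq> A" using agg_reachable_tiles[OF assms(1,3)] by blast
  then have "agg_step n A M (M + {#1#})"
    using agg_step_iff_merges_into merges_into_refl assms(2,3) by simp
  with assms(1) show ?thesis by (rule agg_reachable.step)
qed

lemma agg_reachable_merges_into:
  assumes "agg_reachable n A M" "merges_into A M M'" "1 \<in> A"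
  shows "agg_reachable n A M'"
  using assms(1)
proof cases
  case init
  then obtain P where "{#} = \<Sum>\<^sub># P" "\<forall>p\<in>#P. p \<noteq> {#}" "M' = image_mset sum_mset P"
    using assms(2) unfolding merges_into_def by blast
  then have "M' = {#}" by (metis Union_mset_empty_conv image_mset_is_empty_iff multiset_nonemptyE)
  then show ?thesis by (simp add: agg_reachable.init)
next
  \<comment> \<open>Perform the extra merge already in the step that produced \<open>M\<close>.\<close>
  case (step M0)
  have tiles: "set_mset M0 \<subseteq> A" using agg_reachable_tiles[OF step(1) assms(3)] by blast
  then have "size M0 < n" "merges_into A (M0 + {#1#}) M"
    using step(2) agg_step_iff_merges_into assms(3) by blast+
  then have "agg_step n A M0 M'"
    using agg_step_iff_merges_into[OF tiles assms(3)] merges_into_trans[OF _ assms(2)] by blast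
  with step(1) show ?thesis by (rule agg_reachable.step)
qed

lemma merges_into_subset_mset_D:
  assumes "merges_into A X Y" "N \<subseteq># Y"
  obtains X' where "X' \<subseteq># X" "merges_into A X' N"
proof -
  obtain P where P: "X = \<Sum>\<^sub># P" "\<forall>p\<in>#P. p \<noteq> {#} \<and> sum_mset p \<in> A" "Y = image_mset sum_mset P"
    using assms(1) unfolding merges_into_def by blast
  obtain Z where "Y = N + Z" using assms(2) mset_subset_eq_exists_conv by blast
  with P(3) obtain PN PZ where "P = PN + PZ" "N = image_mset sum_mset PN"
    using image_mset_eq_plusD[of sum_mset P N Z] by auto
  with P have "\<Sum>\<^sub># PN \<subseteq># X" "merges_into A (\<Sum>\<^sub># PN) N"
    unfolding merges_into_def by auto
  then show thesis by (rule that)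
qed

lemma agg_reachable_subset_mset:
  assumes "agg_reachable n A M" "1 \<in> A"
  shows "N \<subseteq># M \<Longrightarrow> agg_reachable n A N"
  using assms(1)
proof (induction arbitrary: N)
  case init then show ?case by (simp add: agg_reachable.init)
next
  case (step M M')
  have tiles: "set_mset M \<subseteq> A" using agg_reachable_tiles[OF step(1) assms(2)] by blast
  then have size: "size M < n" and merge: "merges_into A (M + {#1#}) M'"
    using step(2) agg_step_iff_merges_into assms(2) by blast+
  obtain X where X: "X \<subseteq># M + {#1#}" "merges_into A X N"
    using merge step(4) by (rule merges_into_subset_mset_D)
  \<comment> \<open>Replay the step on the tiles merging into \<open>N\<close>; the new tile \<open>1\<close> is among them or not.\<close>
  show ?case
  proof (cases "1 \<in># X")
    case True
    then obtain Q where Q: "X = Q + {#1#}" by (metis add_mset_add_single insert_DiffM)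
    then have "Q \<subseteq># M" using X(1) by simp
    then have "set_mset Q \<subseteq> A" "size Q < n"
      using tiles size by (meson set_mset_mono subset_trans, meson le_less_trans size_mset_mono)
    with X(2) Q have "agg_step n A Q N" using agg_step_iff_merges_into assms(2) by simp
    with step.IH[OF \<open>Q \<subseteq># M\<close>] show ?thesis by (rule agg_reachable.step)
  next
    case False
    then have "X \<subseteq># M" using X(1) subset_eq_diff_conv[of X "{#1#}" M] by (simp add: diff_single_trivial)
    with step.IH X(2) show ?thesis using agg_reachable_merges_into assms(2) by blast
  qed
qed

lemma agg_reachable_add_mset_Suc:
  assumes "agg_reachable k A N" "agg_reachable (Suc k) A {#x#}"
  shows "agg_reachable (Suc k) A (add_mset x N)"
  using assms(1)
proof induction
  case init then show ?case using assms(2) by simp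
next
  case (step N N')
  from step(2) obtain R G where RG: "size N < k" "N + {#1#} = R + \<Sum>\<^sub># G"
    "\<forall>g \<in># G. g \<noteq> {#} \<and> sum_mset g \<in> A" "N' = R + image_mset sum_mset G"
    unfolding agg_step_def by blast
  then have "agg_step (Suc k) A (add_mset x N) (add_mset x N')"
    unfolding agg_step_def by (intro conjI exI[of _ "add_mset x R"] exI[of _ G]) auto
  with step(3) show ?case by (rule agg_reachable.step)
qed

lemma sum_mset_mono_subset_mset: "M \<subseteq># (N :: nat multiset) \<Longrightarrow> sum_mset M \<le> sum_mset N"
  by (auto simp: subset_mset.le_iff_add)

lemma gap_le: "y \<in> A \<Longrightarrow> x < y \<Longrightarrow> gap A x \<le> enat (y - x)"
proof -
  assume "y \<in> A" "x < y"
  then have "(LEAST z. z \<in> A \<and> z > x) \<le> y" "(LEAST z. z \<in> A \<and> z > x) > x"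
    by (auto intro: Least_le) (metis (mono_tags, lifting) LeastI)
  moreover have "\<exists>z\<in>A. z > x" using \<open>y \<in> A\<close> \<open>x < y\<close> by blast
  ultimately show ?thesis unfolding gap_def by auto
qed

lemma le_of_lt_gap:
  assumes "c \<le> x" "c + d \<in> A" "enat d < gap A x"
  shows "c + d \<le> x"
proof (rule ccontr)
  assume "\<not> c + d \<le> x"
  then have "gap A x \<le> enat (c + d - x)" using gap_le assms(2) by simp
  also have "\<dots> \<le> enat d" using assms(1) by simp
  finally show False using assms(3) by simp
qed

lemma gap_eq_next:
  assumes "y \<in> A" "x < y" "\<And>z. z \<in> A \<Longrightarrow> x < z \<Longrightarrow> y \<le> z"
  shows "gap A x = enat (y - x)"
proof -
  have "(LEAST z. z \<in> A \<and> z > x) = y" using assms by (intro Least_equality) auto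
  with assms show ?thesis unfolding gap_def by auto
qed

lemma gap_Max: "finite A \<Longrightarrow> gap A (Max A) = \<infinity>"
  unfolding gap_def by (auto simp: not_less)

lemma sum_mset_le_Total: "agg_reachable n A M \<Longrightarrow> enat (sum_mset M) \<le> Total n A"
  unfolding Total_def by (auto intro: Sup_upper)

lemma Single_le_Total: "Single n A \<le> Total n A"
  unfolding Single_def by (rule Sup_least) (use sum_mset_le_Total in fastforce)

lemma Total_0: "1 \<in> A \<Longrightarrow> Total 0 A = 0"
proof -
  assume "1 \<in> A"
  then have "agg_reachable 0 A M \<longleftrightarrow> M = {#}" for M
    using agg_reachable_tiles(2)[of 0 A M] agg_reachable.init[of 0 A] by auto
  then have "{enat (sum_mset M) | M. agg_reachable 0 A M} = {0}" by (auto simp: zero_enat_def)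
  then show ?thesis unfolding Total_def by simp
qed

lemma Total_le_Max:
  assumes "finite A" "1 \<in> A"
  shows "Total n A \<le> enat (n * Max A)"
  unfolding Total_def
proof (rule Sup_least, clarify)
  fix M assume r: "agg_reachable n A M"
  then have "\<forall>x\<in>#M. x \<le> Max A" using agg_reachable_tiles(1)[OF r assms(2)] assms(1) by auto
  then have "sum_mset M \<le> size M * Max A" by (induction M) auto
  also have "\<dots> \<le> n * Max A" using agg_reachable_tiles(2)[OF r assms(2)] by simp
  finally show "enat (sum_mset M) \<le> enat (n * Max A)" by simp
qed

lemma agg_reachable_sum_mset_down:
  assumes "agg_reachable n A M" "d \<le> sum_mset M"
  shows "\<exists>N. agg_reachable n A N \<and> sum_mset N = d"
  using assms
proof (induction arbitrary: d)
  case init then show ?case using agg_reachable.init by fastforce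
next
  case (step M M')
  show ?case
  proof (cases "d = sum_mset M'")
    case True then show ?thesis using agg_reachable.step[OF step(1,2)] by blast
  next
    case False
    then show ?thesis using step agg_step_sum_mset[OF step(2)] by simp
  qed
qed

lemma Total_attained:
  assumes "enat d \<le> Total n A"
  shows "\<exists>N. agg_reachable n A N \<and> sum_mset N = d"
proof (cases d)
  case 0 then show ?thesis using agg_reachable.init by fastforce
next
  case (Suc d')
  then have "enat d' < Total n A" using assms Suc_ile_eq by simp
  then obtain M where "agg_reachable n A M" "d' < sum_mset M"
    unfolding Total_def less_Sup_iff by auto
  then show ?thesis using agg_reachable_sum_mset_down Suc by (metis Suc_leI)
qed

lemma Total_attained_with_empty_cell:
  assumes "enat (Suc d) \<le> Total n A"
  shows "\<exists>N. agg_reachable n A N \<and> size N < n \<and> sum_mset N = d"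
proof -
  obtain N where N: "agg_reachable n A N" "sum_mset N = Suc d" using Total_attained[OF assms] by blast
  then show ?thesis
  proof cases
    case (step M)
    then show ?thesis using agg_step_sum_mset[OF step(2)] N(2) unfolding agg_step_def by auto
  qed simp
qed

lemma agg_reachable_Suc_singleton_next:
  assumes "agg_reachable (Suc k) A {#x#}" "y \<in> A" "x < y" "enat (y - x) \<le> Total k A"
  shows "agg_reachable (Suc k) A {#y#}"
proof -
  have "Suc (y - x - 1) = y - x" using assms(3) by simp
  then obtain N where N: "agg_reachable k A N" "size N < k" "sum_mset N = y - x - 1"
    using Total_attained_with_empty_cell[of "y - x - 1" k A] assms(4) by auto
  let ?g = "add_mset x N + {#1#}"
  have "sum_mset ?g = y" using N(3) assms(3) by simp
  then have "agg_step (Suc k) A (add_mset x N) {#y#}"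
    unfolding agg_step_def using N(2) assms(2)
    by (intro conjI exI[of _ "{#}"] exI[of _ "{#?g#}"]) auto
  with agg_reachable_add_mset_Suc[OF N(1) assms(1)] show ?thesis by (rule agg_reachable.step)
qed

lemma agg_reachable_Suc_singleton:
  assumes "0 \<notin> A" "1 \<in> A" "x \<in> A" "\<forall>z\<in>A. z < x \<longrightarrow> gap A z \<le> Total k A"
  shows "agg_reachable (Suc k) A {#x#}"
  using assms(3,4)
proof (induction x rule: less_induct)
  case (less x)
  show ?case
  proof (cases "x \<le> 1")
    case True
    then have "x = 1" using less(2) assms(1) by (cases x) auto
    have "agg_step (Suc k) A {#} {#1#}"
      unfolding agg_step_def by (intro conjI exI[of _ "{#1#}"] exI[of _ "{#}"]) auto
    then show ?thesis using \<open>x = 1\<close> agg_reachable.init agg_reachable.step by blast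
  next
    case False
    define y where "y = Max {z\<in>A. z < x}"
    have "finite {z\<in>A. z < x}" "1 \<in> {z\<in>A. z < x}" using False assms(2) by auto
    then have "y \<in> {z\<in>A. z < x}" unfolding y_def by (intro Max_in) auto
    then have "y \<in> A" "y < x" by auto
    have below: "z \<le> y" if "z \<in> A" "z < x" for z using that y_def by auto
    have "gap A y = enat (x - y)"
      using less(2) \<open>y < x\<close> by (rule gap_eq_next) (use below in \<open>meson not_le\<close>)
    then have "enat (x - y) \<le> Total k A" using less(3) \<open>y \<in> A\<close> \<open>y < x\<close> by metis
    moreover have "agg_reachable (Suc k) A {#y#}" using less \<open>y \<in> A\<close> \<open>y < x\<close> by auto
    ultimately show ?thesis using agg_reachable_Suc_singleton_next less(2) \<open>y < x\<close> by blast
  qed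
qed

lemma agg_reachable_Suc_cases:
  assumes "0 \<notin> A" "1 \<in> A" "m \<in> A" "gap A m > Total k A"
    and "agg_reachable (Suc k) A M"
  shows "M = {#} \<or> (\<exists>c N. M = add_mset c N \<and> c \<le> m \<and> agg_reachable k A N)"
  using assms(5)
proof induction
  case (step M M')
  have "set_mset M \<subseteq> A" using agg_reachable_tiles[OF step(1) assms(2)] by blast
  then have sz: "size M < Suc k" and mg: "merges_into A (M + {#1#}) M'"
    using step(2) agg_step_iff_merges_into assms(2) by blast+
  from step.IH show ?case
  proof
    assume "M = {#}"
    then have "M' = add_mset 1 {#}" using mg merges_into_singleton by simp
    moreover have "(1::nat) \<le> m" using assms(1,3) by (cases m) auto
    ultimately show ?thesis using agg_reachable.init by blast
  next
    assume "\<exists>c N. M = add_mset c N \<and> c \<le> m \<and> agg_reachable k A N"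
    then obtain c N where cN: "M = add_mset c N" "c \<le> m" "agg_reachable k A N" by blast
    have N1: "agg_reachable k A (N + {#1#})"
      using agg_reachable_add_one[OF cN(3)] sz cN(1) assms(2) by simp
    have "merges_into A (add_mset c (N + {#1#})) M'" using mg cN(1) by (simp add: add_mset_commute)
    then obtain h Z where hZ: "h \<subseteq># N + {#1#}" "c + sum_mset h \<in> A"
      "M' = add_mset (c + sum_mset h) Z" "merges_into A (N + {#1#} - h) Z"
      by (rule merges_into_add_mset_D)
    have "agg_reachable k A Z"
      using agg_reachable_subset_mset[OF N1 assms(2), of "N + {#1#} - h"] hZ(4)
        agg_reachable_merges_into assms(2) by auto
    moreover have "c + sum_mset h \<le> m"
    proof (rule le_of_lt_gap[OF cN(2) hZ(2)])
      have "enat (sum_mset h) \<le> enat (sum_mset (N + {#1#}))"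
        using sum_mset_mono_subset_mset[OF hZ(1)] by simp
      also have "\<dots> \<le> Total k A" using sum_mset_le_Total[OF N1] .
      also have "\<dots> < gap A m" by fact
      finally show "enat (sum_mset h) < gap A m" .
    qed
    ultimately show ?thesis using hZ(3) by blast
  qed
qed simp

lemma Single_Total_Suc_unbounded:
  assumes "0 \<notin> A" "1 \<in> A" "\<not> (\<exists>x\<in>A. gap A x > Total k A)"
  shows "Single (Suc k) A = \<infinity>" "Total (Suc k) A = \<infinity>"
proof -
  have infinite: "infinite A"
  proof
    assume "finite A"
    have "Total k A \<le> enat (k * Max A)" using Total_le_Max[OF \<open>finite A\<close> assms(2)] .
    also have "\<dots> < gap A (Max A)" using gap_Max[OF \<open>finite A\<close>] by simp
    finally have "gap A (Max A) > Total k A" .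
    moreover have "Max A \<in> A" using \<open>finite A\<close> assms(2) by (auto intro: Max_in)
    ultimately show False using assms(3) by blast
  qed
  have "agg_reachable (Suc k) A {#x#}" if "x \<in> A" for x
    using agg_reachable_Suc_singleton[OF assms(1,2) that] assms(3) by (auto simp: not_less)
  then have "{enat x | x. x \<in> A \<and> agg_reachable (Suc k) A {#x#}} = enat ` A" by auto
  moreover have "infinite (enat ` A)" using infinite by (simp add: finite_image_iff inj_on_def)
  ultimately show "Single (Suc k) A = \<infinity>" unfolding Single_def Sup_enat_def by auto
  then show "Total (Suc k) A = \<infinity>" using Single_le_Total[of "Suc k" A] by (simp add: top_enat_def)
qed

lemma Single_Suc_le:
  assumes "0 \<notin> A" "1 \<in> A" "m \<in> A" "gap A m > Total k A"
  shows "Single (Suc k) A \<le> enat m"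
  unfolding Single_def
  by (rule Sup_least) (use agg_reachable_Suc_cases[OF assms] in \<open>fastforce simp: single_eq_add_mset\<close>)

lemma Total_Suc_le:
  assumes "0 \<notin> A" "1 \<in> A" "m \<in> A" "gap A m > Total k A"
  shows "Total (Suc k) A \<le> enat m + Total k A"
  unfolding Total_def[of "Suc k"]
proof (rule Sup_least, clarify)
  fix M assume "agg_reachable (Suc k) A M"
  then consider "M = {#}" | c N where "M = add_mset c N" "c \<le> m" "agg_reachable k A N"
    using agg_reachable_Suc_cases[OF assms] by blast
  then show "enat (sum_mset M) \<le> enat m + Total k A"
  proof cases
    case (2 c N)
    then have "enat c + enat (sum_mset N) \<le> enat m + Total k A"
      using sum_mset_le_Total by (intro add_mono) auto
    with 2 show ?thesis by simp
  qed (simp add: zero_enat_def[symmetric])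
qed

lemma Single_Total_Suc_bounded:
  assumes "0 \<notin> A" "1 \<in> A" "\<exists>x\<in>A. gap A x > Total k A"
  defines "m \<equiv> LEAST x. x \<in> A \<and> gap A x > Total k A"
  shows "Single (Suc k) A = enat m" "Total (Suc k) A = enat m + Total k A"
proof -
  have m: "m \<in> A" "gap A m > Total k A"
    using LeastI_ex[of "\<lambda>x. x \<in> A \<and> gap A x > Total k A"] assms(3) m_def by auto
  have "gap A z \<le> Total k A" if "z \<in> A" "z < m" for z
    using not_less_Least[of z "\<lambda>x. x \<in> A \<and> gap A x > Total k A"] that m_def by (auto simp: not_less)
  then have reach_m: "agg_reachable (Suc k) A {#m#}"
    using agg_reachable_Suc_singleton[OF assms(1,2) m(1)] by blast
  then have "enat m \<le> Single (Suc k) A" unfolding Single_def using m(1) by (auto intro: Sup_upper)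
  with Single_Suc_le[OF assms(1,2) m] show "Single (Suc k) A = enat m" by simp
  obtain t where t: "Total k A = enat t" using m(2) by (cases "Total k A") auto
  then obtain N where "agg_reachable k A N" "sum_mset N = t" using Total_attained[of t k A] by auto
  then have "enat m + Total k A \<le> Total (Suc k) A"
    using sum_mset_le_Total[OF agg_reachable_add_mset_Suc[OF _ reach_m]] t by fastforce
  with Total_Suc_le[OF assms(1,2) m] show "Total (Suc k) A = enat m + Total k A" by simp
qed

theorem mainTheorem7:
  fixes A :: "nat set" and n :: nat
  assumes "0 \<notin> A" and "1 \<in> A" and "n \<ge> 1"
  shows "Single n A = (if \<exists>x\<in>A. gap A x > Total (n - 1) A
                       then enat (LEAST x. x \<in> A \<and> gap A x > Total (n - 1) A)
                       else \<infinity>)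
       \<and> ((\<not> (\<exists>x\<in>A. gap A x > Total (n - 1) A)) \<longrightarrow> Total n A = \<infinity>)
       \<and> Total n A = Single n A + Total (n - 1) A
       \<and> Total n A = (\<Sum>i = 1..n. Single i A)"
proof -
  have recursion: "Total (Suc k) A = Single (Suc k) A + Total k A" for k
    using Single_Total_Suc_bounded[OF assms(1,2)] Single_Total_Suc_unbounded[OF assms(1,2)]
    by (cases "\<exists>x\<in>A. gap A x > Total k A") simp_all
  have sum: "Total k A = (\<Sum>i = 1..k. Single i A)" for k
    by (induction k) (simp_all add: Total_0[OF assms(2)] recursion add.commute)
  obtain k where n: "n = Suc k" using assms(3) by (cases n) auto
  show ?thesis
    using Single_Total_Suc_bounded[OF assms(1,2), of k] Single_Total_Suc_unbounded[OF assms(1,2), of k]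
      recursion[of k] sum[of n] n
    by auto
qed

end
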